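(* Let $k\ge 1$ and $\rho\ge 0$ be integers. Every connected graph $G=(V,E)$ with at least $k$ vertices and $\mathrm{tb}_k(G)\leq\rho$ has a balanced $\mathbf{D_\rho^k}$-separator, i.e., there exist $k$ distinct vertices $v_1,\dots,v_k$ such that every connected component of $G[V\setminus \bigcup_{j=1}^k D_\rho(v_j,G)]$ has at most $|V|/2$ vertices.
   Context: Graphs are finite, connected, unweighted, undirected and simple; $d_G$ is the shortest-path distance, $D_r(v,G)=\{u: d_G(u,v)\le r\}$, and $G[S]$ is the subgraph induced by $S$. A tree-decomposition of $G=(V,E)$ is a pair $(\{X_i\mid i\in I\},T=(I,F))$ with $T$ a tree and bags $X_i\subseteq V$ such that (1) $\bigcup_i X_i=V$; (2) every edge lies in some bag; (3) for each $v\in V$ the nodes $i$ with $v\in X_i$ induce a connected subtree of $T$. The $k$-breadth of a tree-decomposition is the minimum integer $r$ such that each bag $X_i$ is covered by at most $k$ disks of $G$ of radius $r$, i.e., there are vertices $v^i_1,\dots,v^i_k$ of $G$ with $X_i\subseteq D_r(v^i_1,G)\cup\dots\cup D_r(v^i_k,G)$. The $k$-tree-breadth $\mathrm{tb}_k(G)$ is the minimum $k$-breadth over all tree-decompositions of $G$. *)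

theory Defs
  imports Complex_Main
begin

definition simple_graph :: "'a set \<Rightarrow> ('a \<times> 'a) set \<Rightarrow> bool" where
  "simple_graph V E \<longleftrightarrow> finite V \<and> E \<subseteq> V \<times> V \<and> sym E \<and> irrefl E"

definition connected_graph :: "'a set \<Rightarrow> ('a \<times> 'a) set \<Rightarrow> bool" where
  "connected_graph V E \<longleftrightarrow> V \<noteq> {} \<and> (\<forall>u\<in>V. \<forall>v\<in>V. (u, v) \<in> E\<^sup>*)"

definition gdist :: "('a \<times> 'a) set \<Rightarrow> 'a \<Rightarrow> 'a \<Rightarrow> nat" where
  "gdist E u v = (LEAST n. (u, v) \<in> E ^^ n)"

definition disk :: "'a set \<Rightarrow> ('a \<times> 'a) set \<Rightarrow> nat \<Rightarrow> 'a \<Rightarrow> 'a set" where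
  "disk V E r v = {u \<in> V. gdist E u v \<le> r}"

definition induced_edges :: "('a \<times> 'a) set \<Rightarrow> 'a set \<Rightarrow> ('a \<times> 'a) set" where
  "induced_edges E S = E \<inter> (S \<times> S)"

definition components :: "'a set \<Rightarrow> ('a \<times> 'a) set \<Rightarrow> 'a set set" where
  "components S E = {{y \<in> S. (x, y) \<in> (induced_edges E S)\<^sup>*} | x. x \<in> S}"

text \<open>A tree on node set I with (symmetric) edge relation F: a nonempty finite connected
  graph in which removing any edge disconnects its endpoints (minimally connected).\<close>
definition is_tree :: "'b set \<Rightarrow> ('b \<times> 'b) set \<Rightarrow> bool" where
  "is_tree I F \<longleftrightarrow> simple_graph I F \<and> connected_graph I F \<and>
     (\<forall>(i, j) \<in> F. (i, j) \<notin> (F - {(i, j), (j, i)})\<^sup>*)"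

text \<open>Tree-decomposition (X_i)_{i in I} with tree T = (I, F). Nodes are natural numbers
  (every finite tree can be relabelled this way).\<close>
definition tree_decomp :: "'a set \<Rightarrow> ('a \<times> 'a) set \<Rightarrow> nat set \<Rightarrow> (nat \<times> nat) set
    \<Rightarrow> (nat \<Rightarrow> 'a set) \<Rightarrow> bool" where
  "tree_decomp V E I F X \<longleftrightarrow> is_tree I F \<and> (\<forall>i\<in>I. X i \<subseteq> V) \<and>
     (\<Union>i\<in>I. X i) = V \<and>
     (\<forall>(u, v) \<in> E. \<exists>i\<in>I. u \<in> X i \<and> v \<in> X i) \<and>
     (\<forall>v\<in>V. connected_graph {i \<in> I. v \<in> X i} (induced_edges F {i \<in> I. v \<in> X i}))"

definition k_breadth :: "'a set \<Rightarrow> ('a \<times> 'a) set \<Rightarrow> nat \<Rightarrow> nat set \<Rightarrow> (nat \<Rightarrow> 'a set) \<Rightarrow> nat" where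
  "k_breadth V E k I X = (LEAST r. \<forall>i\<in>I. \<exists>vs. length vs = k \<and> set vs \<subseteq> V \<and>
       X i \<subseteq> (\<Union>v\<in>set vs. disk V E r v))"

definition tree_breadth :: "nat \<Rightarrow> 'a set \<Rightarrow> ('a \<times> 'a) set \<Rightarrow> nat" where
  "tree_breadth k V E = (LEAST r. \<exists>I F X. tree_decomp V E I F X \<and> k_breadth V E k I X = r)"

end

theory Submission
  imports Defs
begin

text \<open>Some bag X i of an optimal tree-decomposition leaves only components of at most
  half the size: otherwise every node i has a unique component of V - X i with more than
  half of the vertices, which determines a branch of the tree at i, and stepping from a node
  with smallest such branch into that branch yields a strictly smaller one.
  The bag X i is covered by k disks of radius tb_k(G), so removing the corresponding disks of
  radius \<rho> (padded to k distinct centres) leaves components that sit inside components of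
  V - X i.\<close>

definition del_node_edges :: "'b set \<Rightarrow> ('b \<times> 'b) set \<Rightarrow> 'b \<Rightarrow> ('b \<times> 'b) set" where
  "del_node_edges I F i = F \<inter> ((I - {i}) \<times> (I - {i}))"

lemma del_node_edges_rtrancl_avoids:
  "(a, b) \<in> (del_node_edges I F i)\<^sup>* \<Longrightarrow> a \<noteq> i \<Longrightarrow> b \<noteq> i"
  by (erule rtranclE) (auto simp: del_node_edges_def)

lemma del_node_edges_rtrancl_in:
  "(a, b) \<in> (del_node_edges I F i)\<^sup>* \<Longrightarrow> a \<in> I \<Longrightarrow> b \<in> I"
  by (erule rtranclE) (auto simp: del_node_edges_def)

lemma sym_rtrancl_pair: "sym r \<Longrightarrow> (a, b) \<in> r\<^sup>* \<Longrightarrow> (b, a) \<in> r\<^sup>*"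
  by (meson sym_rtrancl symD)

lemma del_node_edges_rtrancl_sym:
  assumes "sym F" "(a, b) \<in> (del_node_edges I F i)\<^sup>*"
  shows "(b, a) \<in> (del_node_edges I F i)\<^sup>*"
proof -
  have "sym (del_node_edges I F i)"
    using assms(1) unfolding sym_def del_node_edges_def by blast
  then show ?thesis using assms(2) by (rule sym_rtrancl_pair)
qed

lemma components_conn:
  assumes "sym E" "C \<in> components S E" "u \<in> C" "w \<in> C"
  shows "(u, w) \<in> (induced_edges E S)\<^sup>*"
proof -
  obtain x where C: "C = {y \<in> S. (x, y) \<in> (induced_edges E S)\<^sup>*}"
    using assms(2) unfolding components_def by blast
  have sym: "sym (induced_edges E S)"
    using assms(1) unfolding sym_def induced_edges_def by blast
  have "(x, u) \<in> (induced_edges E S)\<^sup>*" "(x, w) \<in> (induced_edges E S)\<^sup>*"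
    using assms(3,4) C by blast+
  then show ?thesis using sym_rtrancl_pair[OF sym] rtrancl_trans by metis
qed

lemma components_subset: "C \<in> components S E \<Longrightarrow> C \<subseteq> S"
  unfolding components_def by blast

lemma components_mono:
  assumes "S' \<subseteq> S" "C \<in> components S' E"
  shows "\<exists>C'\<in>components S E. C \<subseteq> C'"
proof -
  obtain x where x: "x \<in> S'" "C = {y \<in> S'. (x, y) \<in> (induced_edges E S')\<^sup>*}"
    using assms(2) unfolding components_def by blast
  have "induced_edges E S' \<subseteq> induced_edges E S"
    using assms(1) unfolding induced_edges_def by blast
  then have "C \<subseteq> {y \<in> S. (x, y) \<in> (induced_edges E S)\<^sup>*}"
    using x assms(1) rtrancl_mono by blast
  moreover have "{y \<in> S. (x, y) \<in> (induced_edges E S)\<^sup>*} \<in> components S E"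
    using x assms(1) unfolding components_def by blast
  ultimately show ?thesis by blast
qed

lemma small_components_mono:
  assumes "finite S" "S' \<subseteq> S" "\<forall>C\<in>components S E. 2 * card C \<le> n"
    and "C \<in> components S' E"
  shows "real (card C) \<le> real n / 2"
proof -
  obtain C' where C': "C' \<in> components S E" "C \<subseteq> C'"
    using components_mono[OF assms(2,4)] by blast
  have "finite C'" using components_subset[OF C'(1)] assms(1) finite_subset by blast
  then have "card C \<le> card C'" using C'(2) by (rule card_mono)
  moreover have "2 * card C' \<le> n" using assms(3) C'(1) by blast
  ultimately show ?thesis by linarith
qed

lemma majorities_intersect:
  assumes "finite V" "A \<subseteq> V" "B \<subseteq> V" "card V < 2 * card A" "card V < 2 * card B"
  shows "A \<inter> B \<noteq> {}"
proof
  assume "A \<inter> B = {}"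
  then have "card A + card B = card (A \<union> B)"
    using assms(1-3) finite_subset by (intro card_Un_disjoint[symmetric]) auto
  also have "\<dots> \<le> card V" using assms(1-3) by (simp add: card_mono)
  finally show False using assms(4,5) by linarith
qed

locale graph_tree_decomp =
  fixes V :: "'a set" and E :: "('a \<times> 'a) set" and I :: "nat set" and F :: "(nat \<times> nat) set"
    and X :: "nat \<Rightarrow> 'a set"
  assumes graph: "simple_graph V E" and decomp: "tree_decomp V E I F X"
begin

abbreviation "F_del i \<equiv> del_node_edges I F i"

lemma finite_V: "finite V" and sym_E: "sym E"
  using graph by (auto simp: simple_graph_def)

lemma tree: "is_tree I F"
  using decomp by (auto simp: tree_decomp_def)

lemma finite_I: "finite I" and F_subset: "F \<subseteq> I \<times> I" and sym_F: "sym F"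
  and I_nonempty: "I \<noteq> {}" and tree_connected: "u \<in> I \<Longrightarrow> v \<in> I \<Longrightarrow> (u, v) \<in> F\<^sup>*"
  using tree by (auto simp: is_tree_def simple_graph_def connected_graph_def)

lemma tree_edge_bridge:
  assumes "(i, j) \<in> F" shows "(i, j) \<notin> (F - {(i, j), (j, i)})\<^sup>*"
proof -
  have "\<forall>(a, b) \<in> F. (a, b) \<notin> (F - {(a, b), (b, a)})\<^sup>*"
    using tree unfolding is_tree_def by blast
  from bspec[OF this assms] show ?thesis by simp
qed

lemma bag_cover: "v \<in> V \<Longrightarrow> \<exists>l\<in>I. v \<in> X l"
  and edge_in_bag: "(u, v) \<in> E \<Longrightarrow> \<exists>l\<in>I. u \<in> X l \<and> v \<in> X l"
  using decomp by (auto simp: tree_decomp_def)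

lemma bags_of_vertex_connected:
  assumes "v \<notin> X i" "l \<in> I" "v \<in> X l" "l' \<in> I" "v \<in> X l'"
  shows "(l, l') \<in> (F_del i)\<^sup>*"
proof -
  have "v \<in> V" using decomp assms(2,3) by (auto simp: tree_decomp_def)
  then have "(l, l') \<in> (induced_edges F {m \<in> I. v \<in> X m})\<^sup>*"
    using decomp assms(2-5) unfolding tree_decomp_def connected_graph_def by auto
  moreover have "induced_edges F {m \<in> I. v \<in> X m} \<subseteq> F_del i"
    using assms(1) unfolding induced_edges_def del_node_edges_def by auto
  ultimately show ?thesis using rtrancl_mono by blast
qed

lemma path_bags_connected:
  assumes "(u, w) \<in> (induced_edges E (V - X i))\<^sup>*" "u \<notin> X i"
    and "l \<in> I" "u \<in> X l" "l' \<in> I" "w \<in> X l'"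
  shows "(l, l') \<in> (F_del i)\<^sup>*"
  using assms(1,5,6)
proof (induction arbitrary: l' rule: rtrancl_induct)
  case base
  then show ?case using bags_of_vertex_connected assms(2-4) by blast
next
  case (step y z)
  then have yz: "(y, z) \<in> E" "y \<notin> X i" "z \<notin> X i"
    by (auto simp: induced_edges_def)
  obtain m where m: "m \<in> I" "y \<in> X m" "z \<in> X m" using edge_in_bag yz(1) by blast
  have "(l, m) \<in> (F_del i)\<^sup>*" using step.IH m by blast
  moreover have "(m, l') \<in> (F_del i)\<^sup>*"
    using bags_of_vertex_connected yz(3) m step.prems by blast
  ultimately show ?case by (rule rtrancl_trans)
qed

lemma leave_node:
  assumes "(a, x) \<in> F\<^sup>*" "a \<noteq> i"
  shows "(a, x) \<in> (F_del i)\<^sup>* \<or> (\<exists>j. (a, j) \<in> (F_del i)\<^sup>* \<and> (j, i) \<in> F)"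
  using assms(1)
proof (induction rule: rtrancl_induct)
  case base
  then show ?case by simp
next
  case (step x y)
  from step.IH show ?case
  proof
    assume ax: "(a, x) \<in> (F_del i)\<^sup>*"
    show ?thesis
    proof (cases "y = i")
      case True
      then show ?thesis using ax step.hyps(2) by blast
    next
      case False
      have "x \<noteq> i" using del_node_edges_rtrancl_avoids[OF ax assms(2)] .
      then have "(x, y) \<in> F_del i"
        using False step.hyps(2) F_subset by (auto simp: del_node_edges_def)
      then show ?thesis using ax by (blast intro: rtrancl_into_rtrancl)
    qed
  qed blast
qed

definition branch :: "nat \<Rightarrow> 'a set \<Rightarrow> nat set" where
  "branch i C = {x. \<exists>l\<in>I. X l \<inter> C \<noteq> {} \<and> (l, x) \<in> (F_del i)\<^sup>*}"

context
  fixes i C assumes i: "i \<in> I" and C: "C \<in> components (V - X i) E"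
begin

lemma branch_closed: "x \<in> branch i C \<Longrightarrow> (x, y) \<in> (F_del i)\<^sup>* \<Longrightarrow> y \<in> branch i C"
  unfolding branch_def by (blast intro: rtrancl_trans)

lemma branch_subset: "branch i C \<subseteq> I - {i}"
proof
  fix x assume "x \<in> branch i C"
  then obtain l where l: "l \<in> I" "X l \<inter> C \<noteq> {}" "(l, x) \<in> (F_del i)\<^sup>*"
    unfolding branch_def by blast
  have "l \<noteq> i" using l(2) components_subset[OF C] by blast
  then show "x \<in> I - {i}"
    using del_node_edges_rtrancl_avoids[OF l(3)] del_node_edges_rtrancl_in[OF l(3) l(1)] by blast
qed

lemma branch_connected:
  assumes "x \<in> branch i C" "y \<in> branch i C"
  shows "(x, y) \<in> (F_del i)\<^sup>*"
proof -
  obtain l u where l: "l \<in> I" "u \<in> X l" "u \<in> C" "(l, x) \<in> (F_del i)\<^sup>*"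
    using assms(1) unfolding branch_def by blast
  obtain l' u' where l': "l' \<in> I" "u' \<in> X l'" "u' \<in> C" "(l', y) \<in> (F_del i)\<^sup>*"
    using assms(2) unfolding branch_def by blast
  have "(u, u') \<in> (induced_edges E (V - X i))\<^sup>*"
    using components_conn[OF sym_E C l(3) l'(3)] .
  then have ll': "(l, l') \<in> (F_del i)\<^sup>*"
    using path_bags_connected l l' components_subset[OF C] by blast
  have "(x, l) \<in> (F_del i)\<^sup>*"
    using del_node_edges_rtrancl_sym[OF sym_F l(4)] .
  then have "(x, l') \<in> (F_del i)\<^sup>*" using ll' by (rule rtrancl_trans)
  then show ?thesis using l'(4) by (rule rtrancl_trans)
qed

lemma branch_neighbour:
  assumes "C \<noteq> {}"
  shows "\<exists>j\<in>branch i C. (j, i) \<in> F"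
proof -
  obtain u where "u \<in> C" using assms by blast
  then obtain l where l: "l \<in> I" "u \<in> X l"
    using bag_cover components_subset[OF C] by blast
  then have lC: "l \<in> branch i C" using \<open>u \<in> C\<close> unfolding branch_def by blast
  then have "l \<noteq> i" using branch_subset by blast
  then have "(l, i) \<notin> (F_del i)\<^sup>*" using del_node_edges_rtrancl_avoids[of l i] by blast
  then obtain j where "(l, j) \<in> (F_del i)\<^sup>*" "(j, i) \<in> F"
    using leave_node[OF tree_connected[OF l(1) i] \<open>l \<noteq> i\<close>] by blast
  then show ?thesis using branch_closed[OF lC] by blast
qed

end

text \<open>A bag meeting C \<inter> C' would join j and i without using the edge (j, i).\<close>
lemma branch_excludes_parent:
  assumes i: "i \<in> I" and C: "C \<in> components (V - X i) E"
    and j: "j \<in> branch i C" "(j, i) \<in> F" and C': "C' \<in> components (V - X j) E"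
    and CC': "C \<inter> C' \<noteq> {}"
  shows "i \<notin> branch j C'"
proof
  assume i_in: "i \<in> branch j C'"
  have jI: "j \<in> I" using branch_subset[OF i C] j(1) by blast
  obtain u where u: "u \<in> C" "u \<in> C'" using CC' by blast
  then obtain l where l: "l \<in> I" "u \<in> X l"
    using bag_cover components_subset[OF C] by blast
  have "l \<in> branch i C" "l \<in> branch j C'"
    using l u unfolding branch_def by blast+
  then have "(j, l) \<in> (F_del i)\<^sup>*" "(l, i) \<in> (F_del j)\<^sup>*"
    using branch_connected[OF i C j(1)] branch_connected[OF jI C' _ i_in] by blast+
  moreover have "F_del i \<subseteq> F - {(j, i), (i, j)}" "F_del j \<subseteq> F - {(j, i), (i, j)}"
    unfolding del_node_edges_def by auto
  ultimately have "(j, l) \<in> (F - {(j, i), (i, j)})\<^sup>*" "(l, i) \<in> (F - {(j, i), (i, j)})\<^sup>*"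
    using rtrancl_mono by blast+
  then have "(j, i) \<in> (F - {(j, i), (i, j)})\<^sup>*" by (rule rtrancl_trans)
  then show False using tree_edge_bridge[OF j(2)] by blast
qed

text \<open>As i \<notin> branch j C', every F_del j-path inside branch j C' is an F_del i-path.\<close>
lemma branch_shrinks:
  assumes i: "i \<in> I" and C: "C \<in> components (V - X i) E"
    and j: "j \<in> branch i C" "(j, i) \<in> F" and C': "C' \<in> components (V - X j) E"
    and CC': "C \<inter> C' \<noteq> {}"
  shows "branch j C' \<subset> branch i C"
proof -
  have jI: "j \<in> I" "j \<noteq> i" using branch_subset[OF i C] j(1) by auto
  have i_out: "i \<notin> branch j C'" using branch_excludes_parent[OF assms] .
  have lift: "(a, b) \<in> (F_del i)\<^sup>*" if "(a, b) \<in> (F_del j)\<^sup>*" "a \<in> branch j C'" for a b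
    using that
  proof (induction rule: rtrancl_induct)
    case (step y z)
    have "y \<in> branch j C'" using branch_closed[OF jI(1) C' step.prems step.hyps(1)] .
    moreover from this have "z \<in> branch j C'"
      using branch_closed[OF jI(1) C'] step.hyps(2) by blast
    ultimately have "(y, z) \<in> F_del i"
      using i_out step.hyps(2) by (auto simp: del_node_edges_def)
    with step.IH[OF step.prems] show ?case by (rule rtrancl_into_rtrancl)
  qed simp
  have "branch j C' \<subseteq> branch i C"
  proof
    fix x assume x: "x \<in> branch j C'"
    have "C' \<noteq> {}" using C' unfolding components_def by blast
    then obtain j' where j': "j' \<in> branch j C'" "(j', j) \<in> F"
      using branch_neighbour[OF jI(1) C'] by blast
    have "(j, j') \<in> F"  "j' \<in> I" "j' \<noteq> i"
      using j' i_out sym_F branch_subset[OF jI(1) C'] by (auto dest: symD)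
    then have "(j, j') \<in> F_del i" using jI by (simp add: del_node_edges_def)
    moreover have "(j', x) \<in> (F_del i)\<^sup>*"
      using lift[OF branch_connected[OF jI(1) C' j'(1) x] j'(1)] .
    ultimately have "(j, x) \<in> (F_del i)\<^sup>*" by (rule converse_rtrancl_into_rtrancl)
    then show "x \<in> branch i C" by (rule branch_closed[OF i C j(1)])
  qed
  moreover have "j \<notin> branch j C'" using branch_subset[OF jI(1) C'] by blast
  ultimately show ?thesis using j(1) by blast
qed

lemma balanced_bag: "\<exists>i\<in>I. \<forall>C\<in>components (V - X i) E. 2 * card C \<le> card V"
proof (rule ccontr)
  assume "\<not> ?thesis"
  then have "\<forall>i\<in>I. \<exists>C. C \<in> components (V - X i) E \<and> card V < 2 * card C"
    by (auto simp: not_le)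
  from bchoice[OF this] obtain big
    where "\<forall>i\<in>I. big i \<in> components (V - X i) E \<and> card V < 2 * card (big i)"
    by blast
  then have big: "\<And>i. i \<in> I \<Longrightarrow> big i \<in> components (V - X i) E \<and> card V < 2 * card (big i)"
    by blast
  obtain i0 where "i0 \<in> I" using I_nonempty by blast
  then obtain i where i: "i \<in> I" and i_min: "\<And>j. j \<in> I \<Longrightarrow>
      card (branch i (big i)) \<le> card (branch j (big j))"
    using ex_has_least_nat[of "\<lambda>j. j \<in> I" i0 "\<lambda>j. card (branch j (big j))"] by blast
  have "big i \<noteq> {}" using big[OF i] by (intro notI) simp
  then obtain j where j: "j \<in> branch i (big i)" "(j, i) \<in> F"
    using branch_neighbour[OF i] big[OF i] by blast
  have jI: "j \<in> I" using branch_subset[OF i] big[OF i] j(1) by blast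
  have "big i \<subseteq> V" "big j \<subseteq> V"
    using components_subset big[OF i] big[OF jI] by blast+
  then have "big i \<inter> big j \<noteq> {}"
    using majorities_intersect[OF finite_V] big[OF i] big[OF jI] by blast
  then have "branch j (big j) \<subset> branch i (big i)"
    using branch_shrinks[OF i _ j] big[OF i] big[OF jI] by blast
  moreover have "finite (branch i (big i))"
    using branch_subset[OF i] big[OF i] finite_I finite_subset by blast
  ultimately have "card (branch j (big j)) < card (branch i (big i))"
    by (rule psubset_card_mono[rotated])
  then show False using i_min[OF jI] by simp
qed

end

lemma tree_decomp_trivial:
  "simple_graph V E \<Longrightarrow> V \<noteq> {} \<Longrightarrow> tree_decomp V E {0} {} (\<lambda>_. V)"
  unfolding tree_decomp_def is_tree_def simple_graph_def connected_graph_def induced_edges_def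
  by (auto simp: sym_def irrefl_def)

lemma tree_breadth_attained:
  assumes "simple_graph V E" "V \<noteq> {}"
  obtains I F X where "tree_decomp V E I F X" "k_breadth V E k I X = tree_breadth k V E"
proof -
  have "\<exists>I F X. tree_decomp V E I F X \<and> k_breadth V E k I X = tree_breadth k V E"
    unfolding tree_breadth_def by (rule LeastI_ex) (use tree_decomp_trivial[OF assms] in blast)
  then show ?thesis using that by blast
qed

text \<open>The least radius in the definition of k_breadth exists: one disk of radius the largest
  distance (whatever value gdist takes) around any vertex already covers V.\<close>
lemma k_breadth_cover:
  assumes "k \<ge> 1" "finite V" "V \<noteq> {}" "\<forall>i\<in>I. X i \<subseteq> V" "i \<in> I"
  shows "\<exists>vs. length vs = k \<and> set vs \<subseteq> V \<and> X i \<subseteq> (\<Union>v\<in>set vs. disk V E (k_breadth V E k I X) v)"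
proof -
  obtain v0 where v0: "v0 \<in> V" using assms(3) by blast
  define r0 where "r0 = Max ((\<lambda>(u, v). gdist E u v) ` (V \<times> V))"
  have "V \<subseteq> disk V E r0 v0"
    unfolding disk_def r0_def using assms(2) v0 by (auto intro: Max_ge)
  then have "\<forall>i\<in>I. \<exists>vs. length vs = k \<and> set vs \<subseteq> V \<and> X i \<subseteq> (\<Union>v\<in>set vs. disk V E r0 v)"
    using assms(1,4) v0 by (intro ballI exI[of _ "replicate k v0"]) auto
  then have "\<forall>i\<in>I. \<exists>vs. length vs = k \<and> set vs \<subseteq> V \<and>
      X i \<subseteq> (\<Union>v\<in>set vs. disk V E (k_breadth V E k I X) v)"
    unfolding k_breadth_def by (rule LeastI)
  then show ?thesis using assms(5) by blast
qed

lemma disk_mono: "r \<le> s \<Longrightarrow> disk V E r v \<subseteq> disk V E s v"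
  unfolding disk_def by auto

lemma extend_to_distinct_list:
  assumes "finite V" "set vs \<subseteq> V" "length vs \<le> k" "k \<le> card V"
  obtains ws where "length ws = k" "distinct ws" "set vs \<subseteq> set ws" "set ws \<subseteq> V"
proof -
  have "card (set vs) \<le> k" using assms(3) card_length le_trans by blast
  moreover have "card (V - set vs) = card V - card (set vs)"
    using assms(1,2) by (simp add: card_Diff_subset)
  ultimately have "k - card (set vs) \<le> card (V - set vs)" using assms(4) by linarith
  then obtain B where B: "B \<subseteq> V - set vs" "card B = k - card (set vs)" "finite B"
    by (rule obtain_subset_with_card_n)
  then obtain ws where ws: "set ws = set vs \<union> B" "distinct ws"
    using finite_distinct_list[of "set vs \<union> B"] by blast
  have "card (set ws) = card (set vs) + card B"
    unfolding ws(1) using B(1,3) by (intro card_Un_disjoint) auto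
  then have "length ws = k"
    using distinct_card[OF ws(2)] B(2) \<open>card (set vs) \<le> k\<close> by simp
  then show ?thesis using that ws B assms(2) by blast
qed

theorem lemma10:
  fixes V :: "'a set" and E :: "('a \<times> 'a) set" and k \<rho> :: nat
  assumes "k \<ge> 1"
    and "simple_graph V E" and "connected_graph V E"
    and "card V \<ge> k"
    and "tree_breadth k V E \<le> \<rho>"
  shows "\<exists>vs. length vs = k \<and> distinct vs \<and> set vs \<subseteq> V \<and>
           (\<forall>C \<in> components (V - (\<Union>v\<in>set vs. disk V E \<rho> v)) E.
              real (card C) \<le> real (card V) / 2)"
proof -
  have finV: "finite V" and V: "V \<noteq> {}"
    using assms(2,3) by (auto simp: simple_graph_def connected_graph_def)
  obtain I F X where td: "tree_decomp V E I F X" and "k_breadth V E k I X = tree_breadth k V E"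
    using tree_breadth_attained[OF assms(2) V] .
  then have kb: "k_breadth V E k I X \<le> \<rho>" using assms(5) by simp
  interpret graph_tree_decomp V E I F X using assms(2) td by unfold_locales
  obtain i where i: "i \<in> I" and bal: "\<forall>C\<in>components (V - X i) E. 2 * card C \<le> card V"
    using balanced_bag by blast
  have "\<forall>i\<in>I. X i \<subseteq> V" using td by (simp add: tree_decomp_def)
  from k_breadth_cover[OF assms(1) finV V this i] obtain vs where vs: "length vs = k" "set vs \<subseteq> V"
    and cover: "X i \<subseteq> (\<Union>v\<in>set vs. disk V E (k_breadth V E k I X) v)"
    by blast
  obtain ws where ws: "length ws = k" "distinct ws" "set vs \<subseteq> set ws" "set ws \<subseteq> V"
    using extend_to_distinct_list[OF finV vs(2) _ assms(4)] vs(1) by auto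
  have "(\<Union>v\<in>set vs. disk V E (k_breadth V E k I X) v) \<subseteq> (\<Union>v\<in>set ws. disk V E \<rho> v)"
    using ws(3) disk_mono[OF kb, of V E] by (intro UN_mono) auto
  with cover have "X i \<subseteq> (\<Union>v\<in>set ws. disk V E \<rho> v)" by (rule subset_trans)
  then have sub: "V - (\<Union>v\<in>set ws. disk V E \<rho> v) \<subseteq> V - X i"
    by (rule Diff_mono[OF order_refl])
  have "\<forall>C \<in> components (V - (\<Union>v\<in>set ws. disk V E \<rho> v)) E. real (card C) \<le> real (card V) / 2"
    using small_components_mono[OF _ sub bal] finV by blast
  then show ?thesis using ws by blast
qed

end
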